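(* Let $G$ be an abelian group and let $Z$ be a finite multiset of elements of $G$. Then $$|\Sigma(Z)|\leqslant\binom{|Z|}{\dim(Z)}\binom{|Z|+\dim(Z)}{\dim(Z)}.$$
   Context: $|Z|$ is the size of $Z$ counted with multiplicity. The additive span of $Z$ is $\Sigma(Z)=\{\sum_{z\in Z'}z: Z'\subseteq Z\}$, where $Z'$ ranges over sub-multisets of $Z$ and each element appears with its multiplicity in $Z'$. A (multi)set $S$ is dissociated if any two sub-multisets $S_1,S_2\subseteq S$ with $\sum_{s\in S_1}s=\sum_{s\in S_2}s$ are equal. Equivalently, $\sum_{s}\mu_s s=0$ with $\mu_s\in\{-1,0,1\}$ forces all $\mu_s=0$. A dissociated multiset therefore contains no repeated element. $\dim(Z)$ is the size of the largest dissociated sub-multiset of $Z$. *)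

theory Defs
  imports Main "HOL-Library.Multiset"
begin

definition additive_span :: "'a::comm_monoid_add multiset \<Rightarrow> 'a set" where
  "additive_span Z = {sum_mset Z' | Z'. Z' \<subseteq># Z}"

definition dissociated :: "'a::comm_monoid_add multiset \<Rightarrow> bool" where
  "dissociated S \<longleftrightarrow>
     (\<forall>S1 S2. S1 \<subseteq># S \<longrightarrow> S2 \<subseteq># S \<longrightarrow> sum_mset S1 = sum_mset S2 \<longrightarrow> S1 = S2)"

definition mdim :: "'a::comm_monoid_add multiset \<Rightarrow> nat" where
  "mdim Z = Max {size S | S. S \<subseteq># Z \<and> dissociated S}"

end

theory Submission
  imports Defs
begin

text \<open>Every element of the span is the sum of a sub-multiset of Z, i.e. of a multiset M supported
in the set of elements of Z with size M \<le> |Z|. If the support of M has more than dim(Z)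
distinct elements, it is not dissociated, so there are disjoint subsets P, N of the support with
the same sum and |N| \<le> |P|. Removing k copies of P from M and adding k copies of N, where k is
the least multiplicity in M of an element of P, keeps the sum, does not increase the size and
deletes an element from the support. Iterating, every element of the span is the sum of a
multiset of size at most |Z| supported on at most d = dim(Z) elements of Z. There are at most
binom(|Z|, d) such supports, and on a support of d elements there are binom(|Z| + d, d)
multisets of size at most |Z|.\<close>

lemma finite_sizes_subset_mset: "finite {size S | S. S \<subseteq># Z \<and> P S}"
  by (rule finite_subset[of _ "{..size Z}"]) (auto intro: size_mset_mono)

lemma size_le_mdim:
  assumes "S \<subseteq># Z" "dissociated S"
  shows "size S \<le> mdim Z"
  unfolding mdim_def using assms by (intro Max_ge finite_sizes_subset_mset) auto

lemma dissociated_empty: "dissociated {#}"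
  unfolding dissociated_def by auto

lemma mdim_le_size: "mdim Z \<le> size Z"
proof -
  have "{size S | S. S \<subseteq># Z \<and> dissociated S} \<noteq> {}"
    using dissociated_empty by (auto intro!: exI[of _ "{#}"])
  then have "mdim Z \<in> {size S | S. S \<subseteq># Z \<and> dissociated S}"
    unfolding mdim_def by (intro Max_in finite_sizes_subset_mset)
  then obtain S where "S \<subseteq># Z" "mdim Z = size S"
    by blast
  then show ?thesis
    by (simp add: size_mset_mono)
qed

lemma card_set_mset_le_size: "card (set_mset M) \<le> size M"
  using size_mset_mono[OF mset_set_set_mset_msubset[of M]] by simp

lemma sum_mset_repeat_mset_eq:
  fixes A B :: "'a::comm_monoid_add multiset"
  assumes "sum_mset A = sum_mset B"
  shows "sum_mset (repeat_mset k A) = sum_mset (repeat_mset k B)"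
  using assms by (induction k) auto

lemma sum_mset_diff_swap:
  fixes S1 S2 :: "'a::cancel_comm_monoid_add multiset"
  assumes "sum_mset S1 = sum_mset S2"
  shows "sum_mset (S1 - S2) = sum_mset (S2 - S1)"
proof -
  have "S1 = (S1 - S2) + (S1 \<inter># S2)" "S2 = (S2 - S1) + (S1 \<inter># S2)"
    by (simp_all add: multiset_eq_iff) linarith+
  with assms show ?thesis
    by (metis add_right_cancel sum_mset.union)
qed

lemma not_dissociated_obtain_relation:
  fixes S :: "'a::cancel_comm_monoid_add multiset"
  assumes "\<not> dissociated S"
  obtains P N where "P \<subseteq># S" "N \<subseteq># S" "P \<noteq> {#}" "size N \<le> size P"
    "set_mset P \<inter> set_mset N = {}" "sum_mset P = sum_mset N"
proof -
  obtain S1 S2 where S: "S1 \<subseteq># S" "S2 \<subseteq># S" "sum_mset S1 = sum_mset S2" "S1 \<noteq> S2"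
    using assms unfolding dissociated_def by blast
  have sub: "S1 - S2 \<subseteq># S" "S2 - S1 \<subseteq># S"
    using S(1,2) by (meson diff_subset_eq_self subset_mset.order_trans)+
  have disjoint: "set_mset (S1 - S2) \<inter> set_mset (S2 - S1) = {}"
    by (auto simp: in_diff_count)
  have nonempty: "S1 - S2 \<noteq> {#} \<or> S2 - S1 \<noteq> {#}"
    using S(4) by (metis Diff_eq_empty_iff_mset subset_mset.antisym)
  show thesis
  proof (cases "size (S2 - S1) \<le> size (S1 - S2)")
    case True
    with nonempty have "S1 - S2 \<noteq> {#}" by auto
    with True show thesis
      using that[OF sub] disjoint sum_mset_diff_swap[OF S(3)] by blast
  next
    case False
    then have "S2 - S1 \<noteq> {#}" by auto
    with False show thesis
      using that[OF sub(2,1)] disjoint sum_mset_diff_swap[OF S(3)] by auto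
  qed
qed

lemma mset_set_set_mset_if_subset_mset_set:
  assumes "A \<subseteq># mset_set V"
  shows "mset_set (set_mset A) = A"
proof (rule multiset_eqI)
  fix v
  have "count A v \<le> count (mset_set V) v"
    using assms by (rule mset_subset_eq_count)
  also have "\<dots> \<le> 1"
    by (simp add: count_mset_set')
  finally show "count (mset_set (set_mset A)) v = count A v"
    by (auto simp: count_mset_set' simp flip: count_greater_zero_iff)
qed

lemma not_dissociated_mset_set_obtain_relation:
  fixes V :: "'a::cancel_comm_monoid_add set"
  assumes "\<not> dissociated (mset_set V)"
  obtains P N where "P \<subseteq> V" "N \<subseteq> V" "P \<noteq> {}" "card N \<le> card P" "P \<inter> N = {}"
    "sum_mset (mset_set P) = sum_mset (mset_set N)"
proof -
  have "finite V"
    using assms dissociated_empty by (cases "finite V") auto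
  obtain P N where PN: "P \<subseteq># mset_set V" "N \<subseteq># mset_set V" "P \<noteq> {#}" "size N \<le> size P"
    "set_mset P \<inter> set_mset N = {}" "sum_mset P = sum_mset N"
    using not_dissociated_obtain_relation[OF assms] by blast
  have sets: "mset_set (set_mset P) = P" "mset_set (set_mset N) = N"
    using PN(1,2) by (auto intro: mset_set_set_mset_if_subset_mset_set)
  show thesis
  proof (rule that)
    show "set_mset P \<subseteq> V" "set_mset N \<subseteq> V"
      using PN(1,2) \<open>finite V\<close> by (auto dest: mset_subset_eqD)
    show "card (set_mset N) \<le> card (set_mset P)"
      using PN(4) size_mset_set[of "set_mset P"] size_mset_set[of "set_mset N"] sets by simp
  qed (use PN sets in auto)
qed

lemma support_reduction:
  fixes M :: "'a::cancel_comm_monoid_add multiset"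
  assumes "\<not> dissociated (mset_set (set_mset M))"
  obtains M' where "set_mset M' \<subset> set_mset M" "sum_mset M' = sum_mset M" "size M' \<le> size M"
proof -
  obtain P N where PN: "P \<subseteq> set_mset M" "N \<subseteq> set_mset M" "P \<noteq> {}" "card N \<le> card P"
    "P \<inter> N = {}" and relation: "sum_mset (mset_set P) = sum_mset (mset_set N)"
    by (rule not_dissociated_mset_set_obtain_relation[OF assms])
  have fin: "finite P" "finite N"
    using PN(1,2) by (auto intro: finite_subset)
  define k where "k = Min (count M ` P)"
  have "k \<in> count M ` P"
    unfolding k_def using fin PN(3) by (intro Min_in) auto
  then obtain v0 where v0: "v0 \<in> P" "count M v0 = k"
    by auto
  have k_le: "k \<le> count M v" if "v \<in> P" for v
    unfolding k_def using fin that by simp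
  define RP where "RP = repeat_mset k (mset_set P)"
  define RN where "RN = repeat_mset k (mset_set N)"
  have RP_sub: "RP \<subseteq># M"
    using k_le fin by (auto simp: RP_def subseteq_mset_def count_mset_set')
  define M' where "M' = M - RP + RN"
  have count_M': "count M' v =
      (if v \<in> P then count M v - k else if v \<in> N then count M v + k else count M v)" for v
    using PN(5) fin by (auto simp: M'_def RP_def RN_def)
  have "set_mset M' \<subseteq> set_mset M - {v0}"
  proof
    fix v assume "v \<in># M'"
    then show "v \<in> set_mset M - {v0}"
      using count_M'[of v] v0 PN(2) by (auto simp flip: count_greater_zero_iff split: if_splits)
  qed
  then have "set_mset M' \<subset> set_mset M"
    using v0(1) PN(1) by blast
  moreover have "sum_mset M' = sum_mset M"
  proof -
    have "sum_mset RP = sum_mset RN"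
      unfolding RP_def RN_def by (rule sum_mset_repeat_mset_eq[OF relation])
    moreover have "sum_mset M = sum_mset (M - RP) + sum_mset RP"
      using RP_sub by (metis subset_mset.diff_add sum_mset.union)
    ultimately show ?thesis
      unfolding M'_def by simp
  qed
  moreover have "size M' \<le> size M"
  proof -
    have "size RP \<le> size M"
      using RP_sub by (rule size_mset_mono)
    moreover have "size RN \<le> size RP"
      using PN(4) fin by (simp add: RP_def RN_def)
    moreover have "size M' = size M - size RP + size RN"
      by (simp only: M'_def size_union size_Diff_submset[OF RP_sub])
    ultimately show ?thesis
      by linarith
  qed
  ultimately show thesis
    by (rule that)
qed

lemma small_support_representative:
  fixes M Z :: "'a::cancel_comm_monoid_add multiset"
  assumes "set_mset M \<subseteq> set_mset Z"
  obtains M' where "set_mset M' \<subseteq> set_mset M" "card (set_mset M') \<le> mdim Z"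
    "size M' \<le> size M" "sum_mset M' = sum_mset M"
  using assms
proof (induction "card (set_mset M)" arbitrary: M thesis rule: less_induct)
  case less
  show ?case
  proof (cases "card (set_mset M) \<le> mdim Z")
    case True
    then show ?thesis
      using less.prems(1) by blast
  next
    case False
    have "mset_set (set_mset M) \<subseteq># mset_set (set_mset Z)"
      using less.prems(2) by (simp add: subset_imp_msubset_mset_set)
    then have "mset_set (set_mset M) \<subseteq># Z"
      using mset_set_set_mset_msubset subset_mset.order_trans by blast
    with False have "\<not> dissociated (mset_set (set_mset M))"
      using size_le_mdim[of "mset_set (set_mset M)" Z] by auto
    then obtain M1 where M1: "set_mset M1 \<subset> set_mset M" "sum_mset M1 = sum_mset M"
      "size M1 \<le> size M"
      by (rule support_reduction)
    have "card (set_mset M1) < card (set_mset M)"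
      using M1(1) by (simp add: psubset_card_mono)
    moreover have "set_mset M1 \<subseteq> set_mset Z"
      using M1(1) less.prems(2) by blast
    ultimately obtain M' where M': "set_mset M' \<subseteq> set_mset M1" "card (set_mset M') \<le> mdim Z"
      "size M' \<le> size M1" "sum_mset M' = sum_mset M1"
      using less.hyps by blast
    show ?thesis
    proof (rule less.prems(1))
      show "set_mset M' \<subseteq> set_mset M"
        using M'(1) M1(1) by blast
      show "size M' \<le> size M"
        using M'(3) M1(3) by linarith
    qed (use M' M1 in simp_all)
  qed
qed

lemma card_msets_size_le:
  assumes "finite W"
  shows "finite {M. set_mset M \<subseteq> W \<and> size M \<le> n}"
    and "card {M. set_mset M \<subseteq> W \<and> size M \<le> n} = (n + card W) choose card W"
proof -
  have eq: "{M. set_mset M \<subseteq> W \<and> size M \<le> n} = (\<Union>j\<le>n. multisets_of_size W j)"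
    unfolding multisets_of_size_def by auto
  show "finite {M. set_mset M \<subseteq> W \<and> size M \<le> n}"
    unfolding eq using assms by auto
  have "card {M. set_mset M \<subseteq> W \<and> size M \<le> n} = (\<Sum>j\<le>n. card (multisets_of_size W j))"
    unfolding eq using assms finite_multisets_of_size[OF assms]
    by (intro card_UN_disjoint) (auto simp: multisets_of_size_def)
  also have "\<dots> = (\<Sum>j\<le>n. (card W + j - 1) choose j)"
    using assms by (simp add: card_multisets_of_size)
  also have "\<dots> = (n + card W) choose card W"
  proof (cases "card W")
    case 0
    then have "(\<Sum>j\<le>n. (card W + j - 1) choose j) = (\<Sum>j\<le>n. if j = 0 then 1 else 0)"
      by (intro sum.cong) auto
    with 0 show ?thesis
      by simp
  next
    case (Suc r)
    then have "(\<Sum>j\<le>n. (card W + j - 1) choose j) = Suc (r + n) choose n"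
      using sum_choose_lower[of r n] by simp
    also have "\<dots> = (n + card W) choose card W"
      using Suc binomial_symmetric[of n "n + card W"] by (simp add: add.commute)
    finally show ?thesis .
  qed
  finally show "card {M. set_mset M \<subseteq> W \<and> size M \<le> n} = (n + card W) choose card W" .
qed

lemma card_msets_small_support_le:
  fixes U :: "'a set" and e n :: nat
  assumes "finite U" "e \<le> card U"
  defines "R \<equiv> {M. set_mset M \<subseteq> U \<and> card (set_mset M) \<le> e \<and> size M \<le> n}"
  shows "finite R" and "card R \<le> (card U choose e) * ((n + e) choose e)"
proof -
  define Ws where "Ws = {W. W \<subseteq> U \<and> card W = e}"
  define B :: "'a set \<Rightarrow> 'a multiset set" where "B W = {M. set_mset M \<subseteq> W \<and> size M \<le> n}" for W
  have R_sub: "R \<subseteq> (\<Union>W\<in>Ws. B W)"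
  proof
    fix M assume "M \<in> R"
    then obtain W where "set_mset M \<subseteq> W" "W \<subseteq> U" "card W = e"
      using exists_subset_between[of "set_mset M" e U] assms(1,2) unfolding R_def by auto
    with \<open>M \<in> R\<close> show "M \<in> (\<Union>W\<in>Ws. B W)"
      unfolding R_def Ws_def B_def by blast
  qed
  have fin_Ws: "finite Ws"
    unfolding Ws_def using assms(1) by simp
  have fin_W: "finite W" if "W \<in> Ws" for W
    using that assms(1) unfolding Ws_def by (auto intro: finite_subset)
  have fin_B: "finite (B W)" and card_B: "card (B W) = (n + e) choose e" if "W \<in> Ws" for W
    using card_msets_size_le[OF fin_W[OF that]] that unfolding B_def Ws_def by auto
  show "finite R"
    using R_sub fin_Ws fin_B by (meson finite_UN_I finite_subset)
  have "card R \<le> card (\<Union>W\<in>Ws. B W)"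
    using R_sub fin_Ws fin_B by (intro card_mono) auto
  also have "\<dots> \<le> (\<Sum>W\<in>Ws. card (B W))"
    by (rule card_UN_le[OF fin_Ws])
  also have "\<dots> = card Ws * ((n + e) choose e)"
    using card_B by simp
  also have "card Ws = card U choose e"
    unfolding Ws_def by (rule n_subsets[OF assms(1)])
  finally show "card R \<le> (card U choose e) * ((n + e) choose e)" .
qed

lemma binomial_min_le:
  assumes "k \<le> n" "d \<le> n"
  shows "k choose (min d k) \<le> n choose d"
proof (cases "d \<le> k")
  case True
  then show ?thesis
    using assms(1) by (simp add: binomial_right_mono)
next
  case False
  then show ?thesis
    using assms(2) zero_less_binomial[of d n] by (simp add: Suc_leI)
qed

lemma add_choose_self_mono:
  assumes "e \<le> d"
  shows "(n + e) choose e \<le> (n + d) choose d"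
proof -
  have "(n + e) choose e = (n + e) choose n"
    using binomial_symmetric[of e "n + e"] by simp
  also have "\<dots> \<le> (n + d) choose n"
    using assms by (simp add: binomial_right_mono)
  also have "\<dots> = (n + d) choose d"
    using binomial_symmetric[of d "n + d"] by simp
  finally show ?thesis .
qed

text \<open>The minimum matters: a dissociated sub-multiset may repeat an element (\<open>{#1, 1#}\<close> over
\<open>int\<close> is dissociated), so \<open>mdim Z\<close> can exceed the number of distinct elements of \<open>Z\<close>.\<close>

lemma additive_span_subset_sums_small_support:
  fixes Z :: "'a::cancel_comm_monoid_add multiset"
  shows "additive_span Z \<subseteq> sum_mset ` {M. set_mset M \<subseteq> set_mset Z \<and>
    card (set_mset M) \<le> min (mdim Z) (card (set_mset Z)) \<and> size M \<le> size Z}"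
proof
  fix x assume "x \<in> additive_span Z"
  then obtain Z' where Z': "Z' \<subseteq># Z" "sum_mset Z' = x"
    unfolding additive_span_def by auto
  then obtain M where M: "set_mset M \<subseteq> set_mset Z'" "card (set_mset M) \<le> mdim Z"
    "size M \<le> size Z'" "sum_mset M = x"
    using small_support_representative[of Z' Z] by (metis set_mset_mono)
  have "set_mset M \<subseteq> set_mset Z"
    using M(1) set_mset_mono[OF Z'(1)] by simp
  moreover have "size M \<le> size Z"
    using M(3) size_mset_mono[OF Z'(1)] by simp
  moreover have "card (set_mset M) \<le> card (set_mset Z)"
    using \<open>set_mset M \<subseteq> set_mset Z\<close> by (simp add: card_mono)
  ultimately show "x \<in> sum_mset ` {M. set_mset M \<subseteq> set_mset Z \<and>
      card (set_mset M) \<le> min (mdim Z) (card (set_mset Z)) \<and> size M \<le> size Z}"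
    using M(2,4) by auto
qed

theorem proposition3p5:
  fixes Z :: "'a::ab_group_add multiset"
  shows "card (additive_span Z) \<le> (size Z choose mdim Z) * ((size Z + mdim Z) choose mdim Z)"
proof -
  let ?U = "set_mset Z" and ?e = "min (mdim Z) (card (set_mset Z))"
  let ?R = "{M. set_mset M \<subseteq> ?U \<and> card (set_mset M) \<le> ?e \<and> size M \<le> size Z}"
  have fin: "finite ?R"
    by (rule card_msets_small_support_le(1)) auto
  have "card (additive_span Z) \<le> card (sum_mset ` ?R)"
    using additive_span_subset_sums_small_support fin by (intro card_mono finite_imageI)
  also have "\<dots> \<le> card ?R"
    by (rule card_image_le[OF fin])
  also have "\<dots> \<le> (card ?U choose ?e) * ((size Z + ?e) choose ?e)"
    by (rule card_msets_small_support_le(2)) auto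
  also have "\<dots> \<le> (size Z choose mdim Z) * ((size Z + mdim Z) choose mdim Z)"
    by (intro mult_le_mono binomial_min_le add_choose_self_mono card_set_mset_le_size mdim_le_size)
      simp
  finally show ?thesis .
qed

end
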